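(* In any oriented graph, a vertex of maximum score is a weak king.
   Context: An oriented graph is a digraph with no loops and no pair of symmetric arcs. For vertices $u,v$ write $u(1\text{-}0)v$ if there is an arc from $u$ to $v$, and $u(0\text{-}0)v$ if there is no arc between $u$ and $v$. If $D$ has $n$ vertices, the score of a vertex $v$ is $s(v) = n-1+d^+(v)-d^-(v)$, where $d^+(v), d^-(v)$ are the out- and indegree of $v$. A vertex $v$ is weakly reachable within two steps from $u$ if $u(1\text{-}0)v$, or $u(0\text{-}0)v$, or for some vertex $w$ one has $u(1\text{-}0)w(1\text{-}0)v$, or $u(1\text{-}0)w(0\text{-}0)v$, or $u(0\text{-}0)w(1\text{-}0)v$. A vertex $u$ of $D$ is a weak king if every other vertex of $D$ is weakly reachable within two steps from $u$. *)

theory Defs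
  imports Main
begin

definition oriented_graph :: "'a set \<Rightarrow> ('a \<Rightarrow> 'a \<Rightarrow> bool) \<Rightarrow> bool" where
  "oriented_graph V A \<longleftrightarrow> finite V
     \<and> (\<forall>u v. A u v \<longrightarrow> u \<in> V \<and> v \<in> V)
     \<and> (\<forall>v. \<not> A v v)
     \<and> (\<forall>u v. A u v \<longrightarrow> \<not> A v u)"

definition outdeg :: "'a set \<Rightarrow> ('a \<Rightarrow> 'a \<Rightarrow> bool) \<Rightarrow> 'a \<Rightarrow> nat" where
  "outdeg V A v = card {w \<in> V. A v w}"

definition indeg :: "'a set \<Rightarrow> ('a \<Rightarrow> 'a \<Rightarrow> bool) \<Rightarrow> 'a \<Rightarrow> nat" where
  "indeg V A v = card {w \<in> V. A w v}"

definition score :: "'a set \<Rightarrow> ('a \<Rightarrow> 'a \<Rightarrow> bool) \<Rightarrow> 'a \<Rightarrow> int" where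
  "score V A v = int (card V) - 1 + int (outdeg V A v) - int (indeg V A v)"

definition arc10 :: "('a \<Rightarrow> 'a \<Rightarrow> bool) \<Rightarrow> 'a \<Rightarrow> 'a \<Rightarrow> bool" where
  "arc10 A u v \<longleftrightarrow> A u v"

definition arc00 :: "('a \<Rightarrow> 'a \<Rightarrow> bool) \<Rightarrow> 'a \<Rightarrow> 'a \<Rightarrow> bool" where
  "arc00 A u v \<longleftrightarrow> \<not> A u v \<and> \<not> A v u"

definition weakly_reach2 :: "'a set \<Rightarrow> ('a \<Rightarrow> 'a \<Rightarrow> bool) \<Rightarrow> 'a \<Rightarrow> 'a \<Rightarrow> bool" where
  "weakly_reach2 V A u v \<longleftrightarrow>
     arc10 A u v \<or> arc00 A u v \<or>
     (\<exists>w\<in>V. (arc10 A u w \<and> arc10 A w v) \<or> (arc10 A u w \<and> arc00 A w v)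
            \<or> (arc00 A u w \<and> arc10 A w v))"

definition weak_king :: "'a set \<Rightarrow> ('a \<Rightarrow> 'a \<Rightarrow> bool) \<Rightarrow> 'a \<Rightarrow> bool" where
  "weak_king V A u \<longleftrightarrow> u \<in> V \<and> (\<forall>v\<in>V. v \<noteq> u \<longrightarrow> weakly_reach2 V A u v)"

end

theory Submission
  imports Defs
begin

text \<open>If u does not weakly reach v within two steps, then v beats u, v beats every vertex
  that u beats, and everything beating v also beats u. Together with the arc from v to u
  this makes the out-neighbourhood of u a proper subset of that of v and the in-neighbourhood
  of v a proper subset of that of u, so v has strictly larger score than u.\<close>

lemma not_weakly_reach2_D:
  assumes "\<not> weakly_reach2 V A u v"
  shows "A v u" and "\<And>w. w \<in> V \<Longrightarrow> A u w \<Longrightarrow> A v w"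
    and "\<And>w. w \<in> V \<Longrightarrow> A w v \<Longrightarrow> A w u"
  using assms unfolding weakly_reach2_def arc10_def arc00_def by blast+

lemma outdeg_less_if_dominating:
  assumes "finite V" "u \<in> V" "A v u" "\<not> A u u"
    and "\<And>w. w \<in> V \<Longrightarrow> A u w \<Longrightarrow> A v w"
  shows "outdeg V A u < outdeg V A v"
proof -
  have "{w \<in> V. A u w} \<subset> {w \<in> V. A v w}"
    using assms(2-5) by auto
  then show ?thesis
    unfolding outdeg_def using \<open>finite V\<close> by (simp add: psubset_card_mono)
qed

lemma indeg_less_if_dominated:
  assumes "finite V" "v \<in> V" "A v u" "\<not> A v v"
    and "\<And>w. w \<in> V \<Longrightarrow> A w v \<Longrightarrow> A w u"
  shows "indeg V A v < indeg V A u"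
proof -
  have "{w \<in> V. A w v} \<subset> {w \<in> V. A w u}"
    using assms(2-5) by auto
  then show ?thesis
    unfolding indeg_def using \<open>finite V\<close> by (simp add: psubset_card_mono)
qed

lemma score_less_if_not_weakly_reach2:
  assumes "oriented_graph V A" "u \<in> V" "v \<in> V" "\<not> weakly_reach2 V A u v"
  shows "score V A u < score V A v"
proof -
  have "finite V" and irrefl: "\<And>x. \<not> A x x"
    using assms(1) unfolding oriented_graph_def by auto
  note nr = not_weakly_reach2_D[OF assms(4)]
  have "outdeg V A u < outdeg V A v"
    using \<open>finite V\<close> \<open>u \<in> V\<close> nr(1) irrefl nr(2) by (rule outdeg_less_if_dominating)
  moreover have "indeg V A v < indeg V A u"
    using \<open>finite V\<close> \<open>v \<in> V\<close> nr(1) irrefl nr(3) by (rule indeg_less_if_dominated)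
  ultimately show ?thesis
    unfolding score_def by linarith
qed

theorem theorem5:
  fixes V :: "'a set" and A :: "'a \<Rightarrow> 'a \<Rightarrow> bool" and u :: 'a
  assumes "oriented_graph V A"
    and "u \<in> V"
    and "\<forall>v\<in>V. score V A v \<le> score V A u"
  shows "weak_king V A u"
  unfolding weak_king_def
proof (intro conjI ballI impI)
  show "u \<in> V" by fact
  fix v assume "v \<in> V"
  show "weakly_reach2 V A u v"
  proof (rule ccontr)
    assume "\<not> weakly_reach2 V A u v"
    then have "score V A u < score V A v"
      by (rule score_less_if_not_weakly_reach2[OF assms(1,2) \<open>v \<in> V\<close>])
    moreover have "score V A v \<le> score V A u"
      using assms(3) \<open>v \<in> V\<close> by blast
    ultimately show False
      by simp
  qed
qed

end
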